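(* Let $G$ be a simple loopless graph on $[L]$ and $p\ge1$. The map $\Phi_p:\Pi_{2p}(G)\to\mathcal{P}_{2p}(G)$ is surjective.
   Context: $\mathcal{T}(G)=\langle v\in[L]: uv=vu \text{ for } (u,v)\in E(G)\rangle$ is the trace monoid of $G$, $e$ the empty word. Words are adjacent, $w_1\leftrightarrow w_2$, if $w_1=vw_2$ or $w_2=vw_1$ for a letter $v$. $\mathcal{P}_{2p}(G)=\{w\in\mathcal{T}(G)^{2p}: e\leftrightarrow w_1\leftrightarrow\cdots\leftrightarrow w_{2p}=e\}$. $P_2(2p)$ is the set of pair partitions of $[2p]$; blocks $\{u_1,v_1\},\{u_2,v_2\}$ cross if $u_1<u_2<v_1<v_2$; $F_\pi$ is the graph on the blocks of $\pi$ with edges between crossing blocks. $\Pi_{2p}(G)=\{(\pi,\phi):\pi\in P_2(2p),\ \phi\in\operatorname{Hom}(F_\pi,G)\}$. Definition of $\Phi_p$ (it takes values in $\mathcal{P}_{2p}(G)$): (1) For $p=1$, if $\phi$ assigns label $i$ to the block $\{1,2\}$, $\Phi_1(\pi,\phi)=(i,e)$. (2) Given $\Phi_p$ and $(\pi,\phi)\in\Pi_{2(p+1)}(G)$, let $r$ be the smallest index that is the larger element of its block, $U=\{s,r\}\in\pi$ with $s<r$, $i_s=\phi(U)$, $\sigma=\pi\setminus\{U\}$, $\psi=\phi|_\sigma$. Identify $P_2([2(p+1)]\setminus\{s,r\})$ with $P_2(2p)$ via the order-preserving bijection, write $u=\Phi_p(\sigma,\psi)=(u_k)_{k\in[2(p+1)]\setminus\{s,r\}}$,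 and let $u_{k^-}$ be $u_j$ for the largest $j<k$, $j\notin\{s,r\}$, or $e$ if none exists. Then $\Phi_{p+1}(\pi,\phi)_k=u_k$ for $k<s$; $i_su_{s^-}$ for $k=s$; $i_su_k$ for $s<k<r$; $u_{r^-}$ for $k=r$; $u_k$ for $k>r$. *)

theory Defs
  imports Main "HOL-Library.Disjoint_Sets"
begin

text \<open>Traces (elements of the trace monoid T(G)) are represented as equivalence classes
of words (lists of letters) under the congruence generated by uv = vu for E u v.\<close>

type_synonym trace = "nat list set"

definition tswap :: "(nat \<Rightarrow> nat \<Rightarrow> bool) \<Rightarrow> nat list \<Rightarrow> nat list \<Rightarrow> bool" where
  "tswap E xs ys \<longleftrightarrow> (\<exists>as bs u v. E u v \<and> xs = as @ [u, v] @ bs \<and> ys = as @ [v, u] @ bs)"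

definition tr_eq :: "(nat \<Rightarrow> nat \<Rightarrow> bool) \<Rightarrow> nat list \<Rightarrow> nat list \<Rightarrow> bool" where
  "tr_eq E = (sup (tswap E) (tswap E)\<inverse>\<inverse>)\<^sup>*\<^sup>*"

definition trace_of :: "(nat \<Rightarrow> nat \<Rightarrow> bool) \<Rightarrow> nat list \<Rightarrow> trace" where
  "trace_of E w = {w'. tr_eq E w w'}"

definition Tmon :: "nat \<Rightarrow> (nat \<Rightarrow> nat \<Rightarrow> bool) \<Rightarrow> trace set" where
  "Tmon L E = {trace_of E w | w. set w \<subseteq> {1..L}}"

definition temp :: "(nat \<Rightarrow> nat \<Rightarrow> bool) \<Rightarrow> trace" where
  "temp E = trace_of E []"

definition lmul :: "(nat \<Rightarrow> nat \<Rightarrow> bool) \<Rightarrow> nat \<Rightarrow> trace \<Rightarrow> trace" where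
  "lmul E v t = (\<Union>w\<in>t. trace_of E (v # w))"

definition tadj :: "nat \<Rightarrow> (nat \<Rightarrow> nat \<Rightarrow> bool) \<Rightarrow> trace \<Rightarrow> trace \<Rightarrow> bool" where
  "tadj L E t1 t2 \<longleftrightarrow> (\<exists>v\<in>{1..L}. t1 = lmul E v t2 \<or> t2 = lmul E v t1)"

text \<open>P_{2p}(G): tuples (w_1,...,w_{2p}) stored as a list ws with w_k = ws ! (k-1).\<close>
definition paths :: "nat \<Rightarrow> (nat \<Rightarrow> nat \<Rightarrow> bool) \<Rightarrow> nat \<Rightarrow> trace list set" where
  "paths L E p = {ws. length ws = 2 * p \<and> set ws \<subseteq> Tmon L E
      \<and> tadj L E (temp E) (ws ! 0)
      \<and> (\<forall>k. k + 1 < 2 * p \<longrightarrow> tadj L E (ws ! k) (ws ! (k + 1)))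
      \<and> ws ! (2 * p - 1) = temp E}"

definition pair_partition :: "nat set \<Rightarrow> nat set set \<Rightarrow> bool" where
  "pair_partition S \<pi> \<longleftrightarrow> partition_on S \<pi> \<and> (\<forall>B\<in>\<pi>. card B = 2)"

definition crosses :: "nat set \<Rightarrow> nat set \<Rightarrow> bool" where
  "crosses B C \<longleftrightarrow> (\<exists>u1 v1 u2 v2. B = {u1, v1} \<and> C = {u2, v2} \<and> u1 < u2 \<and> u2 < v1 \<and> v1 < v2)"

definition F_edge :: "nat set set \<Rightarrow> nat set \<Rightarrow> nat set \<Rightarrow> bool" where
  "F_edge \<pi> B C \<longleftrightarrow> B \<in> \<pi> \<and> C \<in> \<pi> \<and> (crosses B C \<or> crosses C B)"

definition is_hom :: "nat \<Rightarrow> (nat \<Rightarrow> nat \<Rightarrow> bool) \<Rightarrow> nat set set \<Rightarrow> (nat set \<Rightarrow> nat) \<Rightarrow> bool" where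
  "is_hom L E \<pi> \<phi> \<longleftrightarrow> (\<forall>B\<in>\<pi>. \<phi> B \<in> {1..L}) \<and> (\<forall>B C. F_edge \<pi> B C \<longrightarrow> E (\<phi> B) (\<phi> C))"

definition PiSet :: "nat \<Rightarrow> (nat \<Rightarrow> nat \<Rightarrow> bool) \<Rightarrow> nat \<Rightarrow> (nat set set \<times> (nat set \<Rightarrow> nat)) set" where
  "PiSet L E p = {(\<pi>, \<phi>). pair_partition {1..2 * p} \<pi> \<and> is_hom L E \<pi> \<phi>}"

text \<open>The map Phi, defined on pair partitions of an arbitrary finite index set (the
order-preserving identification of the paper), as a function from indices to traces.\<close>
fun PhiF :: "nat \<Rightarrow> (nat \<Rightarrow> nat \<Rightarrow> bool) \<Rightarrow> nat set set \<Rightarrow> (nat set \<Rightarrow> nat) \<Rightarrow> nat \<Rightarrow> trace" where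
  "PhiF 0 E \<pi> \<phi> = (\<lambda>k. temp E)"
| "PhiF (Suc p) E \<pi> \<phi> =
     (let r = Min {b. \<exists>a. a < b \<and> {a, b} \<in> \<pi>};
          s = (THE a. a < r \<and> {a, r} \<in> \<pi>);
          U = {s, r};
          \<sigma> = \<pi> - {U};
          u = PhiF p E \<sigma> \<phi>;
          S = \<Union>\<sigma>;
          prev = (\<lambda>k. if \<exists>j\<in>S. j < k then u (Max {j\<in>S. j < k}) else temp E);
          i = \<phi> U
      in (\<lambda>k. if k < s then u k
              else if k = s then lmul E i (prev s)
              else if k < r then lmul E i (u k)
              else if k = r then prev r
              else u k))"

definition Phi :: "nat \<Rightarrow> (nat \<Rightarrow> nat \<Rightarrow> bool) \<Rightarrow> nat set set \<Rightarrow> (nat set \<Rightarrow> nat) \<Rightarrow> trace list" where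
  "Phi p E \<pi> \<phi> = map (PhiF p E \<pi> \<phi>) [1..<2 * p + 1]"

end

theory Submission
  imports Defs "HOL-Library.Multiset"
begin

text \<open>A path in P_{2p}(G) is a walk from e back to e in which every step either multiplies
  by a letter on the left (a rise) or cancels one (a fall). Let r be the first fall, by the
  letter i, and s the last rise by i before r. The trace monoid is left cancellative and
  satisfies Levi's lemma, so every trace strictly between s and r still begins with i and every
  letter added there commutes with i. Deleting the steps s and r and cancelling i in between
  gives a closed walk of length 2p - 2, which by induction is Phi of some (\<sigma>, \<psi>).
  Adding the block {s, r} with label i gives a preimage of the original walk: {s, r} is the
  first block to close, and every block crossing it opens between s and r, so its label
  commutes with i.\<close>

section \<open>Cancellation in the trace monoid\<close>

lemma tr_eq_equivclp: "tr_eq E = equivclp (tswap E)"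
  by (simp add: tr_eq_def equivclp_def symclp_pointfree)

lemma tr_eq_refl [simp]: "tr_eq E w w"
  by (simp add: tr_eq_equivclp)

lemma tr_eq_sym: "tr_eq E x y \<Longrightarrow> tr_eq E y x"
  by (simp add: tr_eq_equivclp equivclp_sym)

lemma tr_eq_trans: "tr_eq E x y \<Longrightarrow> tr_eq E y z \<Longrightarrow> tr_eq E x z"
  unfolding tr_eq_equivclp by (rule equivclp_trans)

lemma tswap_imp_tr_eq: "tswap E x y \<Longrightarrow> tr_eq E x y"
  by (auto simp: tr_eq_equivclp)

lemma tswap_Cons: "tswap E x y \<Longrightarrow> tswap E (a # x) (a # y)"
  unfolding tswap_def by (metis append_Cons)

lemma tr_eq_Cons: "tr_eq E x y \<Longrightarrow> tr_eq E (a # x) (a # y)"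
  unfolding tr_eq_equivclp
  by (induction rule: equivclp_induct) (auto intro: equivclp_into_equivclp tswap_Cons)

lemma tr_eq_mset: "tr_eq E x y \<Longrightarrow> mset x = mset y"
  unfolding tr_eq_equivclp
  by (induction rule: equivclp_induct) (auto simp: tswap_def)

lemma trace_of_eq_iff: "trace_of E x = trace_of E y \<longleftrightarrow> tr_eq E x y"
  unfolding trace_of_def by (blast intro: tr_eq_sym tr_eq_trans tr_eq_refl)

lemma lmul_trace_of: "lmul E a (trace_of E w) = trace_of E (a # w)"
proof -
  have "trace_of E (a # w') = trace_of E (a # w)" if "tr_eq E w w'" for w'
    using that by (simp add: trace_of_eq_iff tr_eq_Cons tr_eq_sym)
  moreover have "w \<in> trace_of E w"
    by (simp add: trace_of_def)
  ultimately show ?thesis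
    unfolding lmul_def trace_of_def[of E w] by blast
qed

lemma tr_eq_move_to_front:
  assumes "symp E" "\<forall>y\<in>set xs. E i y"
  shows "tr_eq E (xs @ i # ys) (i # xs @ ys)"
  using assms(2)
proof (induction xs)
  case (Cons x xs)
  then have "tr_eq E (x # xs @ i # ys) (x # i # xs @ ys)"
    by (auto intro: tr_eq_Cons)
  moreover have "E x i"
    using Cons.prems assms(1) by (auto dest: sympD)
  then have "tswap E (x # i # xs @ ys) (i # x # xs @ ys)"
    unfolding tswap_def by (intro exI[of _ "[]"] exI[of _ "xs @ ys"]) auto
  ultimately show ?case
    by (auto intro: tr_eq_trans tswap_imp_tr_eq)
qed simp

lemma tswap_sym: "symp E \<Longrightarrow> tswap E x y \<Longrightarrow> tswap E y x"
  unfolding tswap_def by (blast dest: sympD)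

definition commutes_to_front :: "(nat \<Rightarrow> nat \<Rightarrow> bool) \<Rightarrow> nat \<Rightarrow> nat list \<Rightarrow> nat list \<Rightarrow> bool" where
  "commutes_to_front E i x v \<longleftrightarrow> i \<in> set v \<and> (\<forall>y\<in>set (takeWhile (\<lambda>z. z \<noteq> i) v). E i y)
     \<and> tr_eq E x (remove1 i v)"

lemma commutes_to_front_tswap:
  assumes "irreflp E" "commutes_to_front E i x v" "tswap E v v'"
  shows "commutes_to_front E i x v'"
proof -
  obtain as bs a b where ab: "E a b" "v = as @ [a, b] @ bs" "v' = as @ [b, a] @ bs"
    using assms(3) unfolding tswap_def by blast
  have "a \<noteq> b"
    using ab(1) assms(1) by (auto dest: irreflpD)
  have swap: "tr_eq E (cs @ a # b # ds) (cs @ b # a # ds)" for cs ds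
    using ab(1) by (intro tswap_imp_tr_eq) (auto simp: tswap_def)
  show ?thesis
  proof (cases "i \<in> set as")
    case True
    then show ?thesis
      using assms(2) ab swap
      by (auto simp: commutes_to_front_def takeWhile_append1 remove1_append intro: tr_eq_trans)
  next
    case False
    then have "takeWhile (\<lambda>z. z \<noteq> i) (as @ cs) = as @ takeWhile (\<lambda>z. z \<noteq> i) cs"
      and "remove1 i (as @ cs) = as @ remove1 i cs" for cs
      by (simp_all add: takeWhile_append remove1_append)
    then show ?thesis
      using assms(2) ab \<open>a \<noteq> b\<close> swap[of as "remove1 i bs"]
      by (cases "a = i"; cases "b = i") (auto simp: commutes_to_front_def intro: tr_eq_trans)
  qed
qed

lemma tr_eq_Cons_split:
  assumes "symp E" "irreflp E" "tr_eq E (i # x) v"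
  shows "\<exists>xs ys. v = xs @ i # ys \<and> (\<forall>y\<in>set xs. E i y) \<and> tr_eq E x (xs @ ys)"
proof -
  have "commutes_to_front E i x v"
    using assms(3) unfolding tr_eq_equivclp
  proof (induction rule: equivclp_induct)
    case base
    then show ?case by (simp add: commutes_to_front_def)
  next
    case (step y z)
    then show ?case
      using commutes_to_front_tswap[OF assms(2)] tswap_sym[OF assms(1)] by blast
  qed
  then have i: "i \<in> set v" "\<forall>y\<in>set (takeWhile (\<lambda>z. z \<noteq> i) v). E i y" "tr_eq E x (remove1 i v)"
    by (auto simp: commutes_to_front_def)
  obtain xs ys where v: "v = xs @ i # ys" "i \<notin> set xs"
    using split_list_first[OF i(1)] by blast
  then have "takeWhile (\<lambda>z. z \<noteq> i) v = xs" "remove1 i v = xs @ ys"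
    by (auto simp: takeWhile_append remove1_append)
  then show ?thesis
    using i v by auto
qed

definition is_trace :: "(nat \<Rightarrow> nat \<Rightarrow> bool) \<Rightarrow> trace \<Rightarrow> bool" where
  "is_trace E t \<longleftrightarrow> (\<exists>w. t = trace_of E w)"

lemma is_trace_temp [simp]: "is_trace E (temp E)"
  by (auto simp: is_trace_def temp_def)

lemma is_trace_Tmon: "t \<in> Tmon L E \<Longrightarrow> is_trace E t"
  by (auto simp: is_trace_def Tmon_def)

lemma lmul_neq_temp: "is_trace E t \<Longrightarrow> lmul E a t \<noteq> temp E"
  by (auto simp: is_trace_def temp_def lmul_trace_of trace_of_eq_iff dest!: tr_eq_mset)

lemma lmul_letter_cancel: "is_trace E t \<Longrightarrow> lmul E a t = lmul E b t \<Longrightarrow> a = b"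
  by (auto simp: is_trace_def lmul_trace_of trace_of_eq_iff dest!: tr_eq_mset)

lemma lmul_not_mutual:
  assumes "is_trace E t" "t' = lmul E b t"
  shows "t \<noteq> lmul E a t'"
proof
  assume "t = lmul E a t'"
  moreover obtain x where "t = trace_of E x"
    using assms(1) by (auto simp: is_trace_def)
  ultimately have "tr_eq E x (a # b # x)"
    using assms(2) by (simp add: lmul_trace_of trace_of_eq_iff)
  then show False
    by (auto dest: tr_eq_mset arg_cong[where f = size])
qed

lemma lmul_left_cancel:
  assumes "symp E" "irreflp E" "is_trace E x" "is_trace E y" "lmul E i x = lmul E i y"
  shows "x = y"
proof -
  obtain xw yw where xy: "x = trace_of E xw" "y = trace_of E yw"
    using assms(3,4) by (auto simp: is_trace_def)
  have "tr_eq E (i # xw) (i # yw)"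
    using assms(5) xy by (simp add: lmul_trace_of trace_of_eq_iff)
  then obtain xs ys where split: "i # yw = xs @ i # ys" "\<forall>y\<in>set xs. E i y" "tr_eq E xw (xs @ ys)"
    using tr_eq_Cons_split[OF assms(1,2)] by blast
  have "xs = []"
    using split(1,2) assms(2) by (cases xs) (auto dest: irreflpD)
  then show ?thesis
    using split xy by (simp add: trace_of_eq_iff)
qed

lemma lmul_eq_lmul_neq:
  assumes "symp E" "irreflp E" "is_trace E t" "is_trace E x" "lmul E a t = lmul E i x" "a \<noteq> i"
  shows "E a i \<and> (\<exists>y. is_trace E y \<and> t = lmul E i y \<and> x = lmul E a y)"
proof -
  obtain tw xw where tx: "t = trace_of E tw" "x = trace_of E xw"
    using assms(3,4) by (auto simp: is_trace_def)
  have "tr_eq E (i # xw) (a # tw)"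
    using assms(5) tx by (simp add: lmul_trace_of trace_of_eq_iff tr_eq_sym)
  then obtain xs ys where split: "a # tw = xs @ i # ys" "\<forall>y\<in>set xs. E i y" "tr_eq E xw (xs @ ys)"
    using tr_eq_Cons_split[OF assms(1,2)] by blast
  obtain xs' where xs: "xs = a # xs'"
    using split(1) assms(6) by (cases xs) auto
  have "tr_eq E tw (i # xs' @ ys)"
    using split xs tr_eq_move_to_front[OF assms(1), of xs' i ys] by simp
  then have "t = lmul E i (trace_of E (xs' @ ys))"
    using tx by (simp add: lmul_trace_of trace_of_eq_iff)
  moreover have "x = lmul E a (trace_of E (xs' @ ys))"
    using tx split(3) xs by (simp add: lmul_trace_of trace_of_eq_iff)
  moreover have "E a i"
    using split(2) xs assms(1) by (auto dest: sympD)
  ultimately show ?thesis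
    by (auto simp: is_trace_def)
qed

definition starts_with :: "(nat \<Rightarrow> nat \<Rightarrow> bool) \<Rightarrow> nat \<Rightarrow> trace \<Rightarrow> bool" where
  "starts_with E i t \<longleftrightarrow> (\<exists>y. is_trace E y \<and> t = lmul E i y)"

definition ldiv :: "(nat \<Rightarrow> nat \<Rightarrow> bool) \<Rightarrow> nat \<Rightarrow> trace \<Rightarrow> trace" where
  "ldiv E i t = (THE y. is_trace E y \<and> t = lmul E i y)"

lemma ldiv_lmul:
  assumes "symp E" "irreflp E" "is_trace E y"
  shows "ldiv E i (lmul E i y) = y"
  unfolding ldiv_def using assms by (auto intro!: the_equality dest: lmul_left_cancel)

lemma starts_with_ldiv:
  assumes "symp E" "irreflp E" "starts_with E i t"
  shows "is_trace E (ldiv E i t)" "t = lmul E i (ldiv E i t)"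
  using assms ldiv_lmul[OF assms(1,2)] by (auto simp: starts_with_def)

lemma starts_with_lmul_neq:
  assumes "symp E" "irreflp E" "is_trace E t" "starts_with E i (lmul E a t)" "a \<noteq> i"
  shows "starts_with E i t"
  using assms lmul_eq_lmul_neq[OF assms(1,2)] unfolding starts_with_def by metis

lemma not_starts_with_temp: "\<not> starts_with E i (temp E)"
  by (auto simp: starts_with_def dest: lmul_neq_temp[where a = i] sym)

section \<open>Paths indexed by finite sets of indices\<close>

definition pred_in :: "'a::linorder set \<Rightarrow> 'a \<Rightarrow> 'a \<Rightarrow> bool" where
  "pred_in S k j \<longleftrightarrow> j \<in> S \<and> j < k \<and> (\<forall>m\<in>S. m < k \<longrightarrow> m \<le> j)"

lemma pred_in_exists:
  assumes "finite S" "j \<in> S" "j < k"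
  obtains j' where "pred_in S k j'"
proof
  let ?B = "{m \<in> S. m < k}"
  have "finite ?B" "?B \<noteq> {}"
    using assms by auto
  then show "pred_in S k (Max ?B)"
    unfolding pred_in_def using Max_in Max_ge by blast
qed

lemma succ_in_exists:
  assumes "finite S" "k \<in> S" "j \<in> S" "k < j"
  obtains k' where "k' \<in> S" "k' \<le> j" "pred_in S k' k"
proof
  let ?A = "{m \<in> S. k < m}"
  have fin: "finite ?A" "?A \<noteq> {}"
    using assms by auto
  show "Min ?A \<in> S" "Min ?A \<le> j"
    using Min_in[OF fin] Min_le[OF fin(1)] assms by auto
  show "pred_in S (Min ?A) k"
    using Min_in[OF fin] Min_le[OF fin(1)] assms(2) unfolding pred_in_def by force
qed

definition pred_val :: "(nat \<Rightarrow> nat \<Rightarrow> bool) \<Rightarrow> nat set \<Rightarrow> (nat \<Rightarrow> trace) \<Rightarrow> nat \<Rightarrow> trace" where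
  "pred_val E S w k = (if \<exists>j\<in>S. j < k then w (Max {j \<in> S. j < k}) else temp E)"

lemma pred_val_pred_in:
  assumes "finite S" "pred_in S k j"
  shows "pred_val E S w k = w j"
proof -
  have "Max {m \<in> S. m < k} = j"
    using assms by (intro Max_eqI) (auto simp: pred_in_def)
  then show ?thesis
    using assms(2) by (auto simp: pred_val_def pred_in_def)
qed

lemma pred_val_temp: "\<forall>m\<in>S. \<not> m < k \<Longrightarrow> pred_val E S w k = temp E"
  by (auto simp: pred_val_def)

lemma pred_val_cong:
  assumes "{m \<in> S. m < k} = {m \<in> S'. m < k'}" "\<forall>m\<in>S. m < k \<longrightarrow> w m = w' m" "finite S"
  shows "pred_val E S w k = pred_val E S' w' k'"
proof -
  have "Max {m \<in> S. m < k} \<in> {m \<in> S. m < k}" if "\<exists>j\<in>S. j < k"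
    using that assms(3) by (intro Max_in) auto
  moreover have "(\<exists>j\<in>S. j < k) \<longleftrightarrow> (\<exists>j\<in>S'. j < k')"
    using assms(1) by blast
  ultimately show ?thesis
    using assms(1,2) unfolding pred_val_def by auto
qed

lemma is_trace_pred_val:
  assumes "finite S" "\<forall>k\<in>S. is_trace E (w k)"
  shows "is_trace E (pred_val E S w k)"
proof (cases "\<exists>j\<in>S. j < k")
  case True
  then obtain j where "pred_in S k j"
    using pred_in_exists[OF assms(1)] by blast
  then show ?thesis
    using assms by (simp add: pred_val_pred_in pred_in_def)
qed (simp add: pred_val_temp)

definition rises :: "(nat \<Rightarrow> nat \<Rightarrow> bool) \<Rightarrow> nat set \<Rightarrow> (nat \<Rightarrow> trace) \<Rightarrow> nat \<Rightarrow> nat \<Rightarrow> bool" where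
  "rises E S w k a \<longleftrightarrow> w k = lmul E a (pred_val E S w k)"

definition falls :: "(nat \<Rightarrow> nat \<Rightarrow> bool) \<Rightarrow> nat set \<Rightarrow> (nat \<Rightarrow> trace) \<Rightarrow> nat \<Rightarrow> nat \<Rightarrow> bool" where
  "falls E S w k a \<longleftrightarrow> pred_val E S w k = lmul E a (w k)"

lemma tadj_pred_val_iff:
  "tadj L E (pred_val E S w k) (w k) \<longleftrightarrow> (\<exists>a\<in>{1..L}. rises E S w k a \<or> falls E S w k a)"
  by (auto simp: tadj_def rises_def falls_def)

text \<open>A path e, w_k, ..., e indexed by the finite set S: the initial e is the predecessor
  value of the least index.\<close>

definition closed_path :: "nat \<Rightarrow> (nat \<Rightarrow> nat \<Rightarrow> bool) \<Rightarrow> nat set \<Rightarrow> (nat \<Rightarrow> trace) \<Rightarrow> bool" where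
  "closed_path L E S w \<longleftrightarrow> finite S \<and> (\<forall>k\<in>S. is_trace E (w k))
     \<and> (\<forall>k\<in>S. \<exists>a\<in>{1..L}. rises E S w k a \<or> falls E S w k a)
     \<and> (S \<noteq> {} \<longrightarrow> w (Max S) = temp E)"

section \<open>Removing the first closing pair\<close>

lemma starts_with_before_first_fall:
  assumes E: "symp E" "irreflp E" and path: "closed_path L E S w"
    and r: "r \<in> S" "falls E S w r i"
    and rises_before: "\<forall>k\<in>S. k < r \<longrightarrow> (\<exists>a. rises E S w k a)"
    and k: "k \<in> S" "k < r" "\<forall>j\<in>S. k < j \<and> j < r \<longrightarrow> \<not> rises E S w j i"
  shows "starts_with E i (w k)"
  using k
proof (induction "r - k" arbitrary: k rule: less_induct)
  case less
  have fin: "finite S" and traces: "\<forall>k\<in>S. is_trace E (w k)"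
    using path by (auto simp: closed_path_def)
  obtain k' where k': "k' \<in> S" "k' \<le> r" "pred_in S k' k"
    using succ_in_exists[OF fin less.prems(1) r(1) less.prems(2)] .
  show ?case
  proof (cases "k' = r")
    case True
    then show ?thesis
      using r k' fin traces by (auto simp: falls_def starts_with_def pred_val_pred_in)
  next
    case False
    then have "k < k'" "k' < r"
      using k' by (auto simp: pred_in_def)
    obtain a where a: "rises E S w k' a"
      using rises_before k' \<open>k' < r\<close> by blast
    then have "a \<noteq> i"
      using less.prems(3) k' \<open>k < k'\<close> \<open>k' < r\<close> by blast
    moreover have "starts_with E i (w k')"
      using less \<open>k < k'\<close> \<open>k' < r\<close> k' by auto
    ultimately show ?thesis
      using starts_with_lmul_neq[OF E] a traces less.prems(1) k' fin
      by (simp add: rises_def pred_val_pred_in)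
  qed
qed

lemma rises_before_first_fall:
  assumes E: "symp E" "irreflp E" and path: "closed_path L E S w"
    and r: "r \<in> S" "falls E S w r i"
    and rises_before: "\<forall>k\<in>S. k < r \<longrightarrow> (\<exists>a. rises E S w k a)"
  shows "\<exists>k\<in>S. k < r \<and> rises E S w k i"
proof (rule ccontr)
  assume none: "\<not> ?thesis"
  have fin: "finite S" and traces: "\<forall>k\<in>S. is_trace E (w k)"
    using path by (auto simp: closed_path_def)
  define k0 where "k0 = Min S"
  have k0: "k0 \<in> S" "\<forall>m\<in>S. \<not> m < k0"
    using Min_in[OF fin] Min_le[OF fin] r(1) by (auto simp: k0_def not_less)
  have pred_k0: "pred_val E S w k0 = temp E"
    using pred_val_temp[OF k0(2)] .
  have "k0 < r"
  proof (rule ccontr)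
    assume "\<not> k0 < r"
    then have "pred_val E S w r = temp E"
      using k0 by (intro pred_val_temp) auto
    then show False
      using r lmul_neq_temp traces by (metis falls_def)
  qed
  then have "starts_with E i (w k0)"
    using starts_with_before_first_fall[OF E path r rises_before k0(1)] none by blast
  moreover obtain a where "w k0 = lmul E a (temp E)" "a \<noteq> i"
    using rises_before k0(1) \<open>k0 < r\<close> none pred_k0 by (metis rises_def)
  ultimately show False
    using starts_with_lmul_neq[OF E is_trace_temp] not_starts_with_temp by metis
qed

text \<open>r is the first falling step (the paper's least closing index) and s the last rise
  by the same letter before it (the index paired with r).\<close>

locale first_fall =
  fixes L :: nat and E :: "nat \<Rightarrow> nat \<Rightarrow> bool" and S :: "nat set" and w :: "nat \<Rightarrow> trace"
    and r i s :: nat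
  assumes symp: "symp E" and irreflp: "irreflp E"
    and path: "closed_path L E S w"
    and r_in: "r \<in> S" and i_in: "i \<in> {1..L}" and falls_r: "falls E S w r i"
    and rises_before_r: "\<And>k. k \<in> S \<Longrightarrow> k < r \<Longrightarrow> \<exists>a\<in>{1..L}. rises E S w k a"
    and s_in: "s \<in> S" and s_less_r: "s < r" and rises_s: "rises E S w s i"
    and s_last: "\<And>k. k \<in> S \<Longrightarrow> s < k \<Longrightarrow> k < r \<Longrightarrow> \<not> rises E S w k i"

lemma exists_first_fall:
  assumes E: "symp E" "irreflp E" and path: "closed_path L E S w" and "S \<noteq> {}"
  obtains r i s where "first_fall L E S w r i s"
proof -
  have fin: "finite S" and traces: "\<forall>k\<in>S. is_trace E (w k)"
    and steps: "\<forall>k\<in>S. \<exists>a\<in>{1..L}. rises E S w k a \<or> falls E S w k a"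
    and last: "w (Max S) = temp E"
    using path \<open>S \<noteq> {}\<close> by (auto simp: closed_path_def)
  have pred_traces: "is_trace E (pred_val E S w k)" for k
    using is_trace_pred_val[OF fin traces] .
  define D where "D = {k \<in> S. \<exists>a\<in>{1..L}. falls E S w k a}"
  have "Max S \<in> D"
    using steps Max_in[OF fin \<open>S \<noteq> {}\<close>] last lmul_neq_temp[OF pred_traces]
    by (force simp: D_def rises_def)
  then have fin_D: "finite D" "D \<noteq> {}"
    using fin by (auto simp: D_def)
  define r where "r = Min D"
  obtain i where r: "r \<in> S" "i \<in> {1..L}" "falls E S w r i"
    using Min_in[OF fin_D] by (auto simp: r_def D_def)
  have rises_before: "\<exists>a\<in>{1..L}. rises E S w k a" if "k \<in> S" "k < r" for k
    using that steps Min_le[OF fin_D(1)] by (force simp: r_def D_def)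
  define T where "T = {k \<in> S. k < r \<and> rises E S w k i}"
  have "T \<noteq> {}"
    using rises_before_first_fall[OF E path r(1,3)] rises_before by (auto simp: T_def)
  moreover have "finite T"
    using fin by (simp add: T_def)
  ultimately have "first_fall L E S w r i (Max T)"
    using E path r rises_before Max_in[of T] Max_ge[of T] by unfold_locales (auto simp: T_def)
  then show ?thesis ..
qed

context first_fall
begin

lemma finite_S: "finite S"
  using path by (simp add: closed_path_def)

lemma is_trace_w: "k \<in> S \<Longrightarrow> is_trace E (w k)"
  using path by (simp add: closed_path_def)

lemma is_trace_pred_val_w: "is_trace E (pred_val E S w k)"
  using is_trace_pred_val finite_S is_trace_w by blast

lemma starts_with_between:
  assumes "k \<in> S" "s \<le> k" "k < r"
  shows "starts_with E i (w k)"
proof (cases "k = s")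
  case True
  then show ?thesis
    using rises_s is_trace_pred_val_w by (auto simp: rises_def starts_with_def)
next
  case False
  then have "s < k"
    using assms(2) by simp
  have "\<forall>j\<in>S. j < r \<longrightarrow> (\<exists>a. rises E S w j a)"
    using rises_before_r by blast
  moreover have "\<forall>j\<in>S. k < j \<and> j < r \<longrightarrow> \<not> rises E S w j i"
    using s_last \<open>s < k\<close> by auto
  ultimately show ?thesis
    by (rule starts_with_before_first_fall[OF symp irreflp path r_in falls_r _ assms(1,3)])
qed

lemmas ldiv_between = starts_with_ldiv[OF symp irreflp starts_with_between]

lemma ldiv_s: "ldiv E i (w s) = pred_val E S w s"
  using rises_s ldiv_lmul[OF symp irreflp is_trace_pred_val_w] by (simp add: rises_def)

lemma ldiv_pred_val_r: "ldiv E i (pred_val E S w r) = w r"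
  using falls_r ldiv_lmul[OF symp irreflp is_trace_w[OF r_in]] by (simp add: falls_def)

lemma rise_between_ldiv:
  assumes "k \<in> S" "s < k" "k < r" "pred_in S k j"
  obtains a where "E a i" "w k = lmul E a (w j)" "ldiv E i (w k) = lmul E a (ldiv E i (w j))"
proof -
  have j: "j \<in> S" "s \<le> j" "j < r"
    using assms s_in by (auto simp: pred_in_def)
  obtain a where a: "w k = lmul E a (w j)"
    using rises_before_r[OF assms(1,3)] assms(4) finite_S by (auto simp: rises_def pred_val_pred_in)
  have "a \<noteq> i"
    using s_last[OF assms(1-3)] a assms(4) finite_S by (auto simp: rises_def pred_val_pred_in)
  have quot: "is_trace E (ldiv E i (w k))" "w k = lmul E i (ldiv E i (w k))"
    using ldiv_between assms(1-3) by auto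
  then have "lmul E a (w j) = lmul E i (ldiv E i (w k))"
    using a by simp
  then obtain y where y: "E a i" "is_trace E y" "w j = lmul E i y" "ldiv E i (w k) = lmul E a y"
    using lmul_eq_lmul_neq[OF symp irreflp is_trace_w[OF j(1)] quot(1)] \<open>a \<noteq> i\<close> by blast
  then have "y = ldiv E i (w j)"
    using ldiv_lmul[OF symp irreflp] by simp
  then show ?thesis
    using a y that by blast
qed

text \<open>Deleting the steps s and r and cancelling i in between inverts one recursion step
  of PhiF.\<close>

definition S_red :: "nat set" where
  "S_red = S - {s, r}"

definition w_red :: "nat \<Rightarrow> trace" where
  "w_red k = (if s < k \<and> k < r then ldiv E i (w k) else w k)"

lemma finite_S_red: "finite S_red"
  using finite_S by (simp add: S_red_def)

lemma card_S_red: "card S_red = card S - 2"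
  using finite_S s_in r_in s_less_r by (simp add: S_red_def card_Diff_subset)

lemma is_trace_w_red: "k \<in> S_red \<Longrightarrow> is_trace E (w_red k)"
  using ldiv_between(1) is_trace_w by (simp add: S_red_def w_red_def)

lemma pred_val_reduced_le_s:
  assumes "k \<le> s"
  shows "pred_val E S_red w_red k = pred_val E S w k"
  using assms s_less_r finite_S_red by (intro pred_val_cong) (auto simp: S_red_def w_red_def)

lemma pred_val_reduced_between:
  assumes "s < k" "k \<le> r"
  shows "pred_val E S_red w_red k = ldiv E i (pred_val E S w k)"
proof -
  obtain j where j: "pred_in S k j"
    using pred_in_exists[OF finite_S s_in assms(1)] .
  then have "s \<le> j" "j < r"
    using s_in assms by (auto simp: pred_in_def)
  show ?thesis
  proof (cases "j = s")
    case True
    then have "pred_val E S_red w_red k = pred_val E S_red w_red s"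
      using j finite_S_red by (intro pred_val_cong) (auto simp: S_red_def pred_in_def)
    then show ?thesis
      using True j pred_val_reduced_le_s ldiv_s finite_S by (simp add: pred_val_pred_in)
  next
    case False
    then have "pred_in S_red k j"
      using j \<open>j < r\<close> by (auto simp: pred_in_def S_red_def)
    then show ?thesis
      using j False \<open>s \<le> j\<close> \<open>j < r\<close> finite_S finite_S_red by (simp add: pred_val_pred_in w_red_def)
  qed
qed

lemma pred_val_reduced_r: "pred_val E S_red w_red r = w r"
  using pred_val_reduced_between[OF s_less_r order.refl] ldiv_pred_val_r by simp

lemma pred_val_reduced_after_r:
  assumes "r < k"
  shows "pred_val E S_red w_red k = pred_val E S w k"
proof -
  obtain j where j: "pred_in S k j"
    using pred_in_exists[OF finite_S r_in assms] .
  then have "r \<le> j"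
    using r_in assms by (auto simp: pred_in_def)
  show ?thesis
  proof (cases "j = r")
    case True
    then have "pred_val E S_red w_red k = pred_val E S_red w_red r"
      using j finite_S_red by (intro pred_val_cong) (auto simp: S_red_def pred_in_def)
    then show ?thesis
      using True j pred_val_reduced_r finite_S by (simp add: pred_val_pred_in)
  next
    case False
    then have "pred_in S_red k j"
      using j \<open>r \<le> j\<close> s_less_r by (auto simp: pred_in_def S_red_def)
    then show ?thesis
      using j False \<open>r \<le> j\<close> finite_S finite_S_red by (simp add: pred_val_pred_in w_red_def)
  qed
qed

lemma reduced_outside:
  assumes "k < s \<or> r < k"
  shows "w_red k = w k" "pred_val E S_red w_red k = pred_val E S w k"
  using assms s_less_r pred_val_reduced_le_s pred_val_reduced_after_r by (auto simp: w_red_def)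

lemma rises_reduced_between_iff:
  assumes "k \<in> S" "s < k" "k < r"
  shows "rises E S_red w_red k a \<longleftrightarrow> rises E S w k a"
proof -
  obtain j where j: "pred_in S k j"
    using pred_in_exists[OF finite_S s_in assms(2)] .
  then have "s \<le> j" "j \<in> S" "j < r"
    using s_in assms by (auto simp: pred_in_def)
  then have traces: "is_trace E (w j)" "is_trace E (ldiv E i (w j))"
    using is_trace_w ldiv_between by auto
  obtain c where c: "w k = lmul E c (w j)" "ldiv E i (w k) = lmul E c (ldiv E i (w j))"
    using rise_between_ldiv[OF assms j] .
  have pred: "pred_val E S w k = w j" "pred_val E S_red w_red k = ldiv E i (w j)"
    using pred_val_reduced_between[OF assms(2)] assms(3) j finite_S by (simp_all add: pred_val_pred_in)
  have "rises E S_red w_red k a \<longleftrightarrow> a = c"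
    using c(2) pred(2) assms traces(2) by (auto simp: rises_def w_red_def dest: lmul_letter_cancel)
  moreover have "rises E S w k a \<longleftrightarrow> a = c"
    using c(1) pred(1) traces(1) by (auto simp: rises_def dest: lmul_letter_cancel)
  ultimately show ?thesis
    by blast
qed

lemma rise_between_ldiv_commutes:
  assumes "k \<in> S" "s < k" "k < r" "rises E S w k a"
  shows "E a i"
proof -
  obtain j where j: "pred_in S k j"
    using pred_in_exists[OF finite_S s_in assms(2)] .
  then have "is_trace E (w j)"
    using is_trace_w by (simp add: pred_in_def)
  obtain c where "E c i" "w k = lmul E c (w j)"
    using rise_between_ldiv[OF assms(1-3) j] by metis
  then show ?thesis
    using assms(4) j finite_S \<open>is_trace E (w j)\<close>
    by (auto simp: rises_def pred_val_pred_in dest: lmul_letter_cancel)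
qed

lemma rises_reduced_before_r:
  assumes "k \<in> S_red" "k < r"
  shows "\<exists>a\<in>{1..L}. rises E S_red w_red k a"
proof -
  have "k \<in> S" "k \<noteq> s"
    using assms by (auto simp: S_red_def)
  then consider "k < s" | "s < k"
    by linarith
  then show ?thesis
  proof cases
    case 1
    then show ?thesis
      using rises_before_r \<open>k \<in> S\<close> assms(2) reduced_outside[of k] by (simp add: rises_def)
  next
    case 2
    then show ?thesis
      using rises_before_r \<open>k \<in> S\<close> assms(2) rises_reduced_between_iff by blast
  qed
qed

lemma last_reduced:
  assumes "S_red \<noteq> {}"
  shows "w_red (Max S_red) = temp E"
proof -
  have last: "w (Max S) = temp E" and max_ge: "\<And>k. k \<in> S \<Longrightarrow> k \<le> Max S"
    using path r_in finite_S by (auto simp: closed_path_def)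
  have "r < Max S"
  proof (rule ccontr)
    assume "\<not> r < Max S"
    then have "Max S = r"
      using max_ge[OF r_in] by simp
    define m where "m = Max S_red"
    have m: "m \<in> S_red" "\<And>k. k \<in> S_red \<Longrightarrow> k \<le> m"
      using Max_in[OF finite_S_red assms] Max_ge[OF finite_S_red] by (auto simp: m_def)
    then have "m < r"
      using max_ge[of m] \<open>Max S = r\<close> by (auto simp: S_red_def)
    then have "pred_in S_red r m"
      using m by (auto simp: pred_in_def)
    then have "w_red m = temp E"
      using pred_val_reduced_r last \<open>Max S = r\<close> finite_S_red by (simp add: pred_val_pred_in)
    moreover obtain a where "rises E S_red w_red m a"
      using rises_reduced_before_r[OF m(1) \<open>m < r\<close>] by blast
    ultimately show False
      using lmul_neq_temp is_trace_pred_val[OF finite_S_red] is_trace_w_red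
      by (metis rises_def)
  qed
  then have "Max S_red = Max S"
    using Max_in[OF finite_S] r_in max_ge s_less_r finite_S_red
    by (intro Max_eqI) (auto simp: S_red_def simp del: Max_in)
  then show ?thesis
    using last reduced_outside(1) \<open>r < Max S\<close> by simp
qed

lemma closed_path_reduced: "closed_path L E S_red w_red"
proof -
  have "\<exists>a\<in>{1..L}. rises E S_red w_red k a \<or> falls E S_red w_red k a" if k: "k \<in> S_red" for k
  proof (cases "k < r")
    case True
    then show ?thesis
      using rises_reduced_before_r k by blast
  next
    case False
    then have "r < k" "k \<in> S"
      using k by (auto simp: S_red_def)
    then show ?thesis
      using path reduced_outside[of k] by (auto simp: closed_path_def rises_def falls_def)
  qed
  then show ?thesis
    using finite_S_red is_trace_w_red last_reduced by (simp add: closed_path_def)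
qed

end

section \<open>Lifting a preimage\<close>

text \<open>PhiF evaluates the recursive call with the same labelling, so the invariant must hold
  for every labelling that agrees with \<psi> on the blocks.\<close>

definition realises :: "nat \<Rightarrow> (nat \<Rightarrow> nat \<Rightarrow> bool) \<Rightarrow> nat \<Rightarrow> nat set \<Rightarrow> (nat \<Rightarrow> trace)
    \<Rightarrow> nat set set \<Rightarrow> (nat set \<Rightarrow> nat) \<Rightarrow> bool" where
  "realises L E p S w \<pi> \<psi> \<longleftrightarrow> pair_partition S \<pi> \<and> is_hom L E \<pi> \<psi>
    \<and> (\<forall>\<phi>. (\<forall>B\<in>\<pi>. \<phi> B = \<psi> B) \<longrightarrow> (\<forall>k\<in>S. PhiF p E \<pi> \<phi> k = w k))
    \<and> (\<forall>a b. a < b \<and> {a, b} \<in> \<pi> \<longrightarrow> rises E S w a (\<psi> {a, b}) \<and> falls E S w b (\<psi> {a, b}))"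

lemma PhiF_Suc_eq:
  assumes "Min {b. \<exists>a. a < b \<and> {a, b} \<in> \<pi>} = r" "(THE a. a < r \<and> {a, r} \<in> \<pi>) = s"
  shows "PhiF (Suc p) E \<pi> \<phi> k =
    (let \<sigma> = \<pi> - {{s, r}}; u = PhiF p E \<sigma> \<phi>; i = \<phi> {s, r}
     in if k < s then u k
        else if k = s then lmul E i (pred_val E (\<Union>\<sigma>) u s)
        else if k < r then lmul E i (u k)
        else if k = r then pred_val E (\<Union>\<sigma>) u r
        else u k)"
  using assms by (simp add: Let_def pred_val_def)

lemma ordered_doubleton_eq:
  fixes a b c d :: "'a::linorder"
  assumes "{a, b} = {c, d}" "a < b" "c < d"
  shows "a = c \<and> b = d"
  using assms by (auto simp: doubleton_eq_iff)

lemma not_crosses_self: "\<not> crosses B B"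
  unfolding crosses_def by (metis less_asym ordered_doubleton_eq less_trans)

locale first_fall_lift = first_fall +
  fixes p :: nat and \<sigma> :: "nat set set" and \<psi> :: "nat set \<Rightarrow> nat"
  assumes realises_reduced: "realises L E p S_red w_red \<sigma> \<psi>"
begin

lemma pair_partition_\<sigma>: "pair_partition S_red \<sigma>"
  and is_hom_\<sigma>: "is_hom L E \<sigma> \<psi>"
  and PhiF_\<sigma>: "\<And>\<phi> k. \<forall>B\<in>\<sigma>. \<phi> B = \<psi> B \<Longrightarrow> k \<in> S_red \<Longrightarrow> PhiF p E \<sigma> \<phi> k = w_red k"
  and blocks_\<sigma>: "\<And>a b. a < b \<Longrightarrow> {a, b} \<in> \<sigma>
     \<Longrightarrow> rises E S_red w_red a (\<psi> {a, b}) \<and> falls E S_red w_red b (\<psi> {a, b})"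
  using realises_reduced by (auto simp: realises_def)

lemma Union_\<sigma>: "\<Union>\<sigma> = S_red"
  using pair_partition_\<sigma> by (auto simp: pair_partition_def partition_on_def)

lemma block_in_S_red: "{a, b} \<in> \<sigma> \<Longrightarrow> a \<in> S_red \<and> b \<in> S_red"
  using Union_\<sigma> by blast

lemma closer_after_r:
  assumes "a < b" "{a, b} \<in> \<sigma>"
  shows "r < b"
proof (rule ccontr)
  assume "\<not> r < b"
  moreover have "b \<in> S_red"
    using block_in_S_red assms(2) by blast
  ultimately have "b < r"
    by (auto simp: S_red_def)
  then obtain c where "rises E S_red w_red b c"
    using rises_reduced_before_r \<open>b \<in> S_red\<close> by blast
  then show False
    using blocks_\<sigma>[OF assms] lmul_not_mutual is_trace_w_red[OF \<open>b \<in> S_red\<close>]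
    by (metis falls_def rises_def)
qed

lemma opener_rises:
  assumes "a < b" "{a, b} \<in> \<sigma>"
  shows "rises E S w a (\<psi> {a, b})"
proof -
  have a: "a \<in> S" "a \<noteq> s" "a \<noteq> r"
    using block_in_S_red assms(2) by (auto simp: S_red_def)
  then consider "a < s \<or> r < a" | "s < a" "a < r"
    by linarith
  then show ?thesis
  proof cases
    case 1
    then show ?thesis
      using blocks_\<sigma>[OF assms] reduced_outside by (simp add: rises_def)
  next
    case 2
    then show ?thesis
      using blocks_\<sigma>[OF assms] rises_reduced_between_iff a(1) by blast
  qed
qed

lemma closer_falls:
  assumes "a < b" "{a, b} \<in> \<sigma>"
  shows "falls E S w b (\<psi> {a, b})"
  using blocks_\<sigma>[OF assms] reduced_outside closer_after_r[OF assms] by (simp add: falls_def)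

lemma crossing_block_commutes:
  assumes "C \<in> \<sigma>" "crosses {s, r} C \<or> crosses C {s, r}"
  shows "E i (\<psi> C)"
  using assms(2)
proof
  assume "crosses {s, r} C"
  then obtain u v where C: "C = {u, v}" "s < u" "u < r" "r < v"
    unfolding crosses_def using ordered_doubleton_eq s_less_r by (metis less_trans)
  then have "u \<in> S"
    using block_in_S_red assms(1) by (auto simp: S_red_def)
  then have "E (\<psi> C) i"
    using rise_between_ldiv_commutes opener_rises C assms(1) by (metis less_trans)
  then show ?thesis
    using symp by (blast dest: sympD)
next
  assume "crosses C {s, r}"
  then obtain u v where "C = {u, v}" "u < v" "v < r"
    unfolding crosses_def using ordered_doubleton_eq s_less_r by (metis less_trans)
  then show ?thesis
    using closer_after_r assms(1) by fastforce
qed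

definition lift_partition :: "nat set set" where
  "lift_partition = insert {s, r} \<sigma>"

definition lift_labels :: "nat set \<Rightarrow> nat" where
  "lift_labels = \<psi>({s, r} := i)"

lemma sr_notin_\<sigma>: "{s, r} \<notin> \<sigma>"
  using block_in_S_red by (auto simp: S_red_def)

lemma pair_partition_lift: "pair_partition S lift_partition"
proof -
  have "partition_on (S - {s, r}) \<sigma>" "disjnt {s, r} (\<Union>\<sigma>)"
    using pair_partition_\<sigma> Union_\<sigma> by (auto simp: pair_partition_def S_red_def disjnt_def)
  then have "partition_on S lift_partition"
    using s_in r_in by (simp add: partition_on_insert lift_partition_def insert_absorb)
  then show ?thesis
    using pair_partition_\<sigma> s_less_r by (auto simp: pair_partition_def lift_partition_def)
qed

lemma is_hom_lift: "is_hom L E lift_partition lift_labels"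
  unfolding is_hom_def
proof (intro conjI allI impI ballI)
  fix B
  assume "B \<in> lift_partition"
  then show "lift_labels B \<in> {1..L}"
    using is_hom_\<sigma> i_in sr_notin_\<sigma> by (auto simp: lift_partition_def lift_labels_def is_hom_def)
next
  fix B C
  assume "F_edge lift_partition B C"
  then have BC: "B \<in> lift_partition" "C \<in> lift_partition" "crosses B C \<or> crosses C B" "B \<noteq> C"
    using not_crosses_self by (auto simp: F_edge_def)
  consider "B = {s, r}" "C \<in> \<sigma>" | "B \<in> \<sigma>" "C = {s, r}" | "B \<in> \<sigma>" "C \<in> \<sigma>"
    using BC(1,2,4) by (auto simp: lift_partition_def)
  then show "E (lift_labels B) (lift_labels C)"
  proof cases
    case 1
    then show ?thesis
      using crossing_block_commutes BC(3) sr_notin_\<sigma> by (auto simp: lift_labels_def)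
  next
    case 2
    then have "E i (\<psi> B)"
      using crossing_block_commutes BC(3) by blast
    then show ?thesis
      using 2 symp sr_notin_\<sigma> by (auto simp: lift_labels_def dest: sympD)
  next
    case 3
    then show ?thesis
      using is_hom_\<sigma> BC(3) sr_notin_\<sigma> by (auto simp: lift_labels_def is_hom_def F_edge_def)
  qed
qed

lemma block_lift_cases:
  assumes "a < b" "{a, b} \<in> lift_partition"
  obtains "a = s" "b = r" | "{a, b} \<in> \<sigma>" "{a, b} \<noteq> {s, r}"
  using assms ordered_doubleton_eq[of a b s r] s_less_r by (auto simp: lift_partition_def)

lemma first_closer_lift: "Min {b. \<exists>a. a < b \<and> {a, b} \<in> lift_partition} = r"
proof (rule Min_eqI)
  have "{b. \<exists>a. a < b \<and> {a, b} \<in> lift_partition} \<subseteq> S"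
    using pair_partition_lift by (auto simp: pair_partition_def partition_on_def)
  then show "finite {b. \<exists>a. a < b \<and> {a, b} \<in> lift_partition}"
    using finite_S by (rule finite_subset)
  show "r \<in> {b. \<exists>a. a < b \<and> {a, b} \<in> lift_partition}"
    using s_less_r by (auto simp: lift_partition_def)
  show "r \<le> b" if "b \<in> {b. \<exists>a. a < b \<and> {a, b} \<in> lift_partition}" for b
    using that closer_after_r by (auto elim: block_lift_cases intro: less_imp_le)
qed

lemma opener_of_r_lift: "(THE a. a < r \<and> {a, r} \<in> lift_partition) = s"
proof (rule the_equality)
  show "s < r \<and> {s, r} \<in> lift_partition"
    using s_less_r by (simp add: lift_partition_def)
  show "a = s" if "a < r \<and> {a, r} \<in> lift_partition" for a
    using that closer_after_r by (auto elim: block_lift_cases)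
qed

lemma PhiF_lift:
  assumes "\<forall>B\<in>lift_partition. \<phi> B = lift_labels B" "k \<in> S"
  shows "PhiF (Suc p) E lift_partition \<phi> k = w k"
proof -
  have \<sigma>: "lift_partition - {{s, r}} = \<sigma>"
    using sr_notin_\<sigma> by (auto simp: lift_partition_def)
  have i: "\<phi> {s, r} = i"
    using assms(1) by (simp add: lift_partition_def lift_labels_def)
  have agree: "PhiF p E \<sigma> \<phi> m = w_red m" if "m \<in> S_red" for m
    using PhiF_\<sigma> assms(1) sr_notin_\<sigma> that by (auto simp: lift_partition_def lift_labels_def)
  have pred: "pred_val E S_red (PhiF p E \<sigma> \<phi>) m = pred_val E S_red w_red m" for m
    using agree finite_S_red by (intro pred_val_cong) auto
  have k: "k \<in> S_red \<or> k = s \<or> k = r"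
    using assms(2) by (auto simp: S_red_def)
  show ?thesis
    unfolding PhiF_Suc_eq[OF first_closer_lift opener_of_r_lift] Let_def \<sigma> i Union_\<sigma> pred
    using k agree s_less_r rises_s pred_val_reduced_le_s pred_val_reduced_r ldiv_between(2)[OF assms(2)]
    by (auto simp: rises_def w_red_def)
qed

lemma blocks_lift:
  assumes "a < b" "{a, b} \<in> lift_partition"
  shows "rises E S w a (lift_labels {a, b}) \<and> falls E S w b (lift_labels {a, b})"
  using assms
proof (cases rule: block_lift_cases)
  case 1
  then show ?thesis
    using rises_s falls_r by (simp add: lift_labels_def)
next
  case 2
  then show ?thesis
    using opener_rises closer_falls assms(1) by (simp add: lift_labels_def)
qed

lemma realises_lift: "realises L E (Suc p) S w lift_partition lift_labels"
  using pair_partition_lift is_hom_lift PhiF_lift blocks_lift by (simp add: realises_def)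

end

lemma closed_path_realised:
  assumes "symp E" "irreflp E"
  shows "closed_path L E S w \<Longrightarrow> card S = 2 * p \<Longrightarrow> \<exists>\<pi> \<psi>. realises L E p S w \<pi> \<psi>"
proof (induction p arbitrary: S w)
  case 0
  then have "S = {}"
    by (simp add: closed_path_def)
  then have "realises L E 0 S w {} \<psi>" for \<psi>
    by (simp add: realises_def pair_partition_def partition_on_empty is_hom_def F_edge_def)
  then show ?case
    by blast
next
  case (Suc p)
  then have "S \<noteq> {}"
    by auto
  then obtain r i s where "first_fall L E S w r i s"
    using exists_first_fall[OF assms Suc.prems(1)] by blast
  then interpret first_fall L E S w r i s .
  have "card S_red = 2 * p"
    using card_S_red Suc.prems(2) by simp
  then obtain \<sigma> \<psi> where "realises L E p S_red w_red \<sigma> \<psi>"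
    using Suc.IH closed_path_reduced by blast
  then interpret first_fall_lift L E S w r i s p \<sigma> \<psi>
    by unfold_locales
  show ?case
    using realises_lift by blast
qed

lemma closed_path_paths:
  assumes "ws \<in> paths L E p" "1 \<le> p"
  shows "closed_path L E {1..2 * p} (\<lambda>k. ws ! (k - 1))"
proof -
  let ?w = "\<lambda>k. ws ! (k - 1)"
  have ws: "length ws = 2 * p" "set ws \<subseteq> Tmon L E" "tadj L E (temp E) (ws ! 0)"
    "\<And>k. k + 1 < 2 * p \<Longrightarrow> tadj L E (ws ! k) (ws ! (k + 1))" "ws ! (2 * p - 1) = temp E"
    using assms(1) by (auto simp: paths_def)
  have adj: "tadj L E (pred_val E {1..2 * p} ?w k) (?w k)" if "k \<in> {1..2 * p}" for k
  proof (cases "k = 1")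
    case True
    then show ?thesis
      using ws(3) by (simp add: pred_val_temp)
  next
    case False
    then have "pred_in {1..2 * p} k (k - 1)"
      using that by (auto simp: pred_in_def)
    moreover have "k - 2 + 1 = k - 1" "k - 2 + 1 < 2 * p"
      using that False by auto
    ultimately show ?thesis
      using ws(4)[of "k - 2"] by (simp add: pred_val_pred_in numeral_2_eq_2)
  qed
  then have "\<exists>a\<in>{1..L}. rises E {1..2 * p} ?w k a \<or> falls E {1..2 * p} ?w k a"
    if "k \<in> {1..2 * p}" for k
    using adj[OF that] tadj_pred_val_iff[of L E "{1..2 * p}" ?w k] by blast
  moreover have "Max {1..2 * p} = 2 * p"
    using assms(2) by (intro Max_eqI) auto
  moreover have "is_trace E (?w k)" if "k \<in> {1..2 * p}" for k
    using that ws(1,2) by (intro is_trace_Tmon) (auto intro: subsetD[OF _ nth_mem])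
  ultimately show ?thesis
    using ws(5) by (simp add: closed_path_def)
qed

theorem lemma3p4:
  fixes L p :: nat and E :: "nat \<Rightarrow> nat \<Rightarrow> bool"
  assumes "\<forall>u v. E u v \<longrightarrow> u \<in> {1..L} \<and> v \<in> {1..L}"
    and "symp E" and "irreflp E"
    and "1 \<le> p"
  shows "\<forall>w\<in>paths L E p. \<exists>(\<pi>, \<phi>)\<in>PiSet L E p. Phi p E \<pi> \<phi> = w"
proof
  fix ws
  assume ws: "ws \<in> paths L E p"
  obtain \<pi> \<psi> where real: "realises L E p {1..2 * p} (\<lambda>k. ws ! (k - 1)) \<pi> \<psi>"
    using closed_path_realised[OF assms(2,3) closed_path_paths[OF ws assms(4)]] by auto
  then have "(\<pi>, \<psi>) \<in> PiSet L E p"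
    by (simp add: realises_def PiSet_def)
  moreover have "Phi p E \<pi> \<psi> = ws"
  proof (rule nth_equalityI)
    show "length (Phi p E \<pi> \<psi>) = length ws"
      using ws by (simp add: Phi_def paths_def)
    show "Phi p E \<pi> \<psi> ! n = ws ! n" if "n < length (Phi p E \<pi> \<psi>)" for n
      using that real by (auto simp: Phi_def realises_def simp del: upt_Suc)
  qed
  ultimately show "\<exists>(\<pi>, \<phi>)\<in>PiSet L E p. Phi p E \<pi> \<phi> = ws"
    by blast
qed

end
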